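(* Let $v$ be a $P$-vertex of the SP tree $T$ with children $x,y$. Then for all $\tilde{\boldsymbol s}_v\in\mathbb Z^{\Lambda}$ and $\tilde{\boldsymbol c}_v\in\mathbb Z_{\ge0}^{\Lambda}$, $$d_v(\tilde{\boldsymbol s}_v,\tilde{\boldsymbol c}_v)=\min\{d_x(\tilde{\boldsymbol s}_x,\tilde{\boldsymbol c}_x)+d_y(\tilde{\boldsymbol s}_y,\tilde{\boldsymbol c}_y)\ :\ \tilde{\boldsymbol s}_x+\tilde{\boldsymbol s}_y=\tilde{\boldsymbol s}_v,\ \tilde{\boldsymbol c}_x+\tilde{\boldsymbol c}_y=\tilde{\boldsymbol c}_v,\ \tilde{\boldsymbol s}_x,\tilde{\boldsymbol s}_y\in\mathbb Z_{\ge0}^{\Lambda},\ \tilde{\boldsymbol c}_x,\tilde{\boldsymbol c}_y\in\mathbb Z_{\ge0}^{\Lambda}\},$$ with the conventions $\infty+z=\infty$ and $\min\emptyset=\infty$.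
   Context: A RobMCF instance $(G,u,c,\boldsymbol b)$ consists of a finite directed graph (parallel arcs allowed) $G=(V,A)$ with $A=A^{\mathrm{fix}}\cup A^{\mathrm{free}}$ (disjoint; fixed and free arcs), capacities $u:A\to\mathbb Z_{\ge0}$, costs $c:A\to\mathbb Z_{\ge0}$, a finite nonempty scenario set $\Lambda$ and balances $b^\lambda:V\to\mathbb Z$, $\lambda\in\Lambda$, with $\sum_v b^\lambda(v)=0$. Series-parallel (SP) digraphs are defined recursively: a single arc $(o,q)$ is an SP digraph with origin $o$ and target $q$; if $G_1$ (origin $o_1$, target $q_1$) and $G_2$ (origin $o_2$, target $q_2$) are SP digraphs, then their series composition (identify $q_1$ with $o_2$; origin $o_1$, target $q_2$) and their parallel composition (identify $o_1$ with $o_2$ to form the origin and $q_1$ with $q_2$ to form the target) are SP digraphs. Here $G$ is an SP digraph. An SP tree $T$ of $G$ is a rooted binary tree whose leaves ($L$-vertices) correspond bijectively to the arcs of $G$ and whose inner vertices are $S$-vertices (ordered children) or $P$-vertices; each tree vertex $v$ is associated with the SP subgraph $G_v$ (origin $o_v$, target $q_v$): a leaf with its single arc, an $S$-vertex with the series composition of its children's subgraphs (first child first), a $P$-vertex with their parallel composition; the root $r$ has $G_r=G$. For a tree vertex $v$, $\tilde{\boldsymbol s}_v=(\tilde s^\lambda_v)_{\lambda\in\Lambda}\in\mathbb Z^{\Lambda}$ and $\tilde{\boldsymbol c}_v=(\tilde c^\lambda_v)_{\lambda\in\Lambda}\in\mathbb Z_{\ge0}^{\Lambda}$, the demand label $d_v(\tilde{\boldsymbol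 s}_v,\tilde{\boldsymbol c}_v)\in\{0,\infty\}$ equals $0$ if there exist functions $f^\lambda:A(G_v)\to\mathbb Z_{\ge0}$, $\lambda\in\Lambda$, with (i) $\sum_{a\in A(G_v)}c(a)f^\lambda(a)=\tilde c^\lambda_v$ for all $\lambda$; (ii) for all $w\in V(G_v)\setminus\{q_v\}$ and $\lambda$: $\sum_{a=(w,z)\in A(G_v)}f^\lambda(a)-\sum_{a=(z,w)\in A(G_v)}f^\lambda(a)$ equals $b^\lambda(w)$ if $w\ne o_v$ and equals $\tilde s^\lambda_v$ if $w=o_v$; (iii) $f^\lambda(a)=f^{\lambda'}(a)$ for all $a\in A^{\mathrm{fix}}\cap A(G_v)$ and $\lambda,\lambda'$; (iv) $f^\lambda(a)\le u(a)$ for all $a\in A(G_v)$, $\lambda$; and $d_v(\tilde{\boldsymbol s}_v,\tilde{\boldsymbol c}_v)=\infty$ otherwise. *)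

theory Defs
  imports Main "HOL-Library.Extended_Nat"
begin

(* SP trees: leaves carry arcs (arc identifiers of type 'a; parallel arcs allowed).
   SPS = S-vertex (ordered children), SPP = P-vertex. *)
datatype 'a sptree = SPL 'a | SPS "'a sptree" "'a sptree" | SPP "'a sptree" "'a sptree"

fun sp_arcs :: "'a sptree \<Rightarrow> 'a set" where
  "sp_arcs (SPL a) = {a}"
| "sp_arcs (SPS t1 t2) = sp_arcs t1 \<union> sp_arcs t2"
| "sp_arcs (SPP t1 t2) = sp_arcs t1 \<union> sp_arcs t2"

definition sp_verts :: "('a \<Rightarrow> 'v) \<Rightarrow> ('a \<Rightarrow> 'v) \<Rightarrow> 'a sptree \<Rightarrow> 'v set" where
  "sp_verts tlf hdf t = tlf ` sp_arcs t \<union> hdf ` sp_arcs t"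

fun sp_orig :: "('a \<Rightarrow> 'v) \<Rightarrow> ('a \<Rightarrow> 'v) \<Rightarrow> 'a sptree \<Rightarrow> 'v" where
  "sp_orig tlf hdf (SPL a) = tlf a"
| "sp_orig tlf hdf (SPS t1 t2) = sp_orig tlf hdf t1"
| "sp_orig tlf hdf (SPP t1 t2) = sp_orig tlf hdf t1"

fun sp_targ :: "('a \<Rightarrow> 'v) \<Rightarrow> ('a \<Rightarrow> 'v) \<Rightarrow> 'a sptree \<Rightarrow> 'v" where
  "sp_targ tlf hdf (SPL a) = hdf a"
| "sp_targ tlf hdf (SPS t1 t2) = sp_targ tlf hdf t2"
| "sp_targ tlf hdf (SPP t1 t2) = sp_targ tlf hdf t1"

(* The subgraph G_t (arcs sp_arcs t, vertices sp_verts t) is obtained by the series /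
   parallel composition prescribed by t: the two parts share exactly the identified
   vertices and no arcs. *)
fun sp_wf :: "('a \<Rightarrow> 'v) \<Rightarrow> ('a \<Rightarrow> 'v) \<Rightarrow> 'a sptree \<Rightarrow> bool" where
  "sp_wf tlf hdf (SPL a) = (tlf a \<noteq> hdf a)"
| "sp_wf tlf hdf (SPS t1 t2) =
     (sp_wf tlf hdf t1 \<and> sp_wf tlf hdf t2 \<and> sp_targ tlf hdf t1 = sp_orig tlf hdf t2
      \<and> sp_verts tlf hdf t1 \<inter> sp_verts tlf hdf t2 = {sp_targ tlf hdf t1}
      \<and> sp_arcs t1 \<inter> sp_arcs t2 = {})"
| "sp_wf tlf hdf (SPP t1 t2) =
     (sp_wf tlf hdf t1 \<and> sp_wf tlf hdf t2
      \<and> sp_orig tlf hdf t1 = sp_orig tlf hdf t2 \<and> sp_targ tlf hdf t1 = sp_targ tlf hdf t2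
      \<and> sp_verts tlf hdf t1 \<inter> sp_verts tlf hdf t2 = {sp_orig tlf hdf t1, sp_targ tlf hdf t1}
      \<and> sp_arcs t1 \<inter> sp_arcs t2 = {})"

(* vertices of the SP tree (as subtrees) *)
fun sp_subtrees :: "'a sptree \<Rightarrow> 'a sptree set" where
  "sp_subtrees (SPL a) = {SPL a}"
| "sp_subtrees (SPS t1 t2) = insert (SPS t1 t2) (sp_subtrees t1 \<union> sp_subtrees t2)"
| "sp_subtrees (SPP t1 t2) = insert (SPP t1 t2) (sp_subtrees t1 \<union> sp_subtrees t2)"

definition is_sp_tree_of ::
  "'v set \<Rightarrow> 'a set \<Rightarrow> ('a \<Rightarrow> 'v) \<Rightarrow> ('a \<Rightarrow> 'v) \<Rightarrow> 'a sptree \<Rightarrow> bool" where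
  "is_sp_tree_of V A tlf hdf T \<longleftrightarrow>
     sp_wf tlf hdf T \<and> sp_arcs T = A \<and> sp_verts tlf hdf T = V"

(* Demand label d_t(s, cc) in {0, \<infinity>}; scenarios are the elements of the finite type 'l *)
definition demand ::
  "('a \<Rightarrow> 'v) \<Rightarrow> ('a \<Rightarrow> 'v) \<Rightarrow> 'a set \<Rightarrow> ('a \<Rightarrow> int) \<Rightarrow> ('a \<Rightarrow> int)
   \<Rightarrow> ('l \<Rightarrow> 'v \<Rightarrow> int) \<Rightarrow> 'a sptree \<Rightarrow> ('l \<Rightarrow> int) \<Rightarrow> ('l \<Rightarrow> int) \<Rightarrow> enat" where
  "demand tlf hdf Afix u c b t s cc =
    (if (\<exists>f :: 'l \<Rightarrow> 'a \<Rightarrow> int.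
          (\<forall>k. (\<Sum>a\<in>sp_arcs t. c a * f k a) = cc k)
        \<and> (\<forall>w \<in> sp_verts tlf hdf t - {sp_targ tlf hdf t}. \<forall>k.
             (\<Sum>a\<in>{a \<in> sp_arcs t. tlf a = w}. f k a) - (\<Sum>a\<in>{a \<in> sp_arcs t. hdf a = w}. f k a)
             = (if w = sp_orig tlf hdf t then s k else b k w))
        \<and> (\<forall>a \<in> Afix \<inter> sp_arcs t. \<forall>k k'. f k a = f k' a)
        \<and> (\<forall>a \<in> sp_arcs t. \<forall>k. 0 \<le> f k a \<and> f k a \<le> u a))
     then 0 else \<infinity>)"

end

theory Submission
  imports Defs
begin

text \<open>A feasible flow of a parallel composition restricts to feasible flows of both parts,
  whose origin supplies add up to the given one; conversely feasible flows of the parts glue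
  along the disjoint arc sets. The supplies of the parts are nonnegative because no arc of an
  SP digraph enters its origin. Since demand labels only take the values \<open>0\<close> and \<open>\<infinity>\<close>, the
  infimum is \<open>0\<close> exactly when some admissible split has both labels \<open>0\<close>.\<close>

lemma finite_sp_arcs: "finite (sp_arcs t)"
  by (induction t) auto

lemma sp_orig_in_verts: "sp_orig tlf hdf t \<in> sp_verts tlf hdf t"
  by (induction t) (auto simp: sp_verts_def)

lemma sp_targ_in_verts: "sp_targ tlf hdf t \<in> sp_verts tlf hdf t"
  by (induction t) (auto simp: sp_verts_def)

lemma sp_wf_orig_neq_targ: "sp_wf tlf hdf t \<Longrightarrow> sp_orig tlf hdf t \<noteq> sp_targ tlf hdf t"
proof (induction t)
  case (SPS t1 t2)
  show ?case
  proof
    assume "sp_orig tlf hdf (SPS t1 t2) = sp_targ tlf hdf (SPS t1 t2)"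
    then have "sp_orig tlf hdf t1 \<in> sp_verts tlf hdf t1 \<inter> sp_verts tlf hdf t2"
      using sp_orig_in_verts sp_targ_in_verts by fastforce
    with SPS show False by auto
  qed
qed auto

lemma sp_wf_head_neq_orig:
  "sp_wf tlf hdf t \<Longrightarrow> a \<in> sp_arcs t \<Longrightarrow> hdf a \<noteq> sp_orig tlf hdf t"
proof (induction t)
  case (SPS t1 t2)
  show ?case
  proof (cases "a \<in> sp_arcs t1")
    case True
    then show ?thesis using SPS.IH(1) SPS.prems(1) by simp
  next
    case False
    with SPS.prems have a: "a \<in> sp_arcs t2" by simp
    then have "hdf a \<in> sp_verts tlf hdf t2" by (simp add: sp_verts_def)
    moreover have "hdf a \<noteq> sp_orig tlf hdf t2" using SPS.IH(2) SPS.prems(1) a by simp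
    ultimately show ?thesis
      using sp_orig_in_verts[of tlf hdf t1] SPS.prems(1) by auto
  qed
next
  case (SPP t1 t2)
  then show ?case by (cases "a \<in> sp_arcs t1") auto
qed simp

lemma sp_wf_subtree: "t \<in> sp_subtrees T \<Longrightarrow> sp_wf tlf hdf T \<Longrightarrow> sp_wf tlf hdf t"
  by (induction T) auto

lemma sp_arcs_subtree: "t \<in> sp_subtrees T \<Longrightarrow> sp_arcs t \<subseteq> sp_arcs T"
  by (induction T) auto

lemma sp_wf_SPP_commute: "sp_wf tlf hdf (SPP x y) \<Longrightarrow> sp_wf tlf hdf (SPP y x)"
  by auto

definition net_out :: "('a \<Rightarrow> 'v) \<Rightarrow> ('a \<Rightarrow> 'v) \<Rightarrow> 'a set \<Rightarrow> ('a \<Rightarrow> int) \<Rightarrow> 'v \<Rightarrow> int" where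
  "net_out tlf hdf X g w =
     (\<Sum>a\<in>{a \<in> X. tlf a = w}. g a) - (\<Sum>a\<in>{a \<in> X. hdf a = w}. g a)"

lemma net_out_Un:
  assumes "finite X" "finite Y" "X \<inter> Y = {}"
  shows "net_out tlf hdf (X \<union> Y) g w = net_out tlf hdf X g w + net_out tlf hdf Y g w"
proof -
  have "(\<Sum>a\<in>{a \<in> X \<union> Y. P a}. g a) = (\<Sum>a\<in>{a \<in> X. P a}. g a) + (\<Sum>a\<in>{a \<in> Y. P a}. g a)"
    for P :: "'a \<Rightarrow> bool"
  proof -
    have "{a \<in> X \<union> Y. P a} = {a \<in> X. P a} \<union> {a \<in> Y. P a}" by auto
    then show ?thesis using assms by (simp add: sum.union_disjoint disjoint_iff)
  qed
  then show ?thesis unfolding net_out_def by simp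
qed

lemma net_out_cong:
  "(\<And>a. a \<in> X \<Longrightarrow> g a = g' a) \<Longrightarrow> net_out tlf hdf X g w = net_out tlf hdf X g' w"
  unfolding net_out_def by (auto intro!: arg_cong2[where f = minus] sum.cong)

lemma net_out_outside_verts:
  "w \<notin> sp_verts tlf hdf t \<Longrightarrow> net_out tlf hdf (sp_arcs t) g w = 0"
proof -
  assume "w \<notin> sp_verts tlf hdf t"
  then have no_arc: "{a \<in> sp_arcs t. tlf a = w} = {}" "{a \<in> sp_arcs t. hdf a = w} = {}"
    by (auto simp: sp_verts_def)
  show ?thesis unfolding net_out_def no_arc by simp
qed

lemma net_out_orig_nonneg:
  assumes "sp_wf tlf hdf t" "\<And>a. a \<in> sp_arcs t \<Longrightarrow> 0 \<le> g a"
  shows "0 \<le> net_out tlf hdf (sp_arcs t) g (sp_orig tlf hdf t)"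
proof -
  have no_arc_in: "{a \<in> sp_arcs t. hdf a = sp_orig tlf hdf t} = {}"
    using sp_wf_head_neq_orig[OF assms(1)] by auto
  show ?thesis unfolding net_out_def no_arc_in using assms(2) by (auto intro: sum_nonneg)
qed

lemma sum_arcs_SPP:
  "sp_wf tlf hdf (SPP x y) \<Longrightarrow>
   (\<Sum>a\<in>sp_arcs x \<union> sp_arcs y. g a) = (\<Sum>a\<in>sp_arcs x. g a) + (\<Sum>a\<in>sp_arcs y. g a)"
  by (simp add: sum.union_disjoint finite_sp_arcs)

lemma net_out_SPP:
  assumes "sp_wf tlf hdf (SPP x y)"
  shows "net_out tlf hdf (sp_arcs x \<union> sp_arcs y) g w =
         net_out tlf hdf (sp_arcs x) g w + net_out tlf hdf (sp_arcs y) g w"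
proof -
  have "sp_arcs x \<inter> sp_arcs y = {}" using assms by simp
  from net_out_Un[OF finite_sp_arcs finite_sp_arcs this] show ?thesis .
qed

definition feasible_flow ::
  "('a \<Rightarrow> 'v) \<Rightarrow> ('a \<Rightarrow> 'v) \<Rightarrow> 'a set \<Rightarrow> ('a \<Rightarrow> int) \<Rightarrow> ('a \<Rightarrow> int)
   \<Rightarrow> ('l \<Rightarrow> 'v \<Rightarrow> int) \<Rightarrow> 'a sptree \<Rightarrow> ('l \<Rightarrow> int) \<Rightarrow> ('l \<Rightarrow> int) \<Rightarrow> ('l \<Rightarrow> 'a \<Rightarrow> int) \<Rightarrow> bool"
where
  "feasible_flow tlf hdf Afix u c b t s cc f \<longleftrightarrow>
     (\<forall>k. (\<Sum>a\<in>sp_arcs t. c a * f k a) = cc k)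
   \<and> (\<forall>w \<in> sp_verts tlf hdf t - {sp_targ tlf hdf t}. \<forall>k.
        net_out tlf hdf (sp_arcs t) (f k) w = (if w = sp_orig tlf hdf t then s k else b k w))
   \<and> (\<forall>a \<in> Afix \<inter> sp_arcs t. \<forall>k k'. f k a = f k' a)
   \<and> (\<forall>a \<in> sp_arcs t. \<forall>k. 0 \<le> f k a \<and> f k a \<le> u a)"

lemma demand_eq_feasible_flow:
  "demand tlf hdf Afix u c b t s cc =
     (if \<exists>f. feasible_flow tlf hdf Afix u c b t s cc f then 0 else \<infinity>)"
  unfolding demand_def feasible_flow_def net_out_def by simp

lemma feasible_flow_net_out:
  assumes "feasible_flow tlf hdf Afix u c b t s cc f" "w \<noteq> sp_targ tlf hdf t"
  shows "net_out tlf hdf (sp_arcs t) (f k) w =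
    (if w \<notin> sp_verts tlf hdf t then 0 else if w = sp_orig tlf hdf t then s k else b k w)"
  using assms net_out_outside_verts by (auto simp: feasible_flow_def)

lemma feasible_flow_SPP_commute:
  assumes "sp_wf tlf hdf (SPP x y)"
  shows "feasible_flow tlf hdf Afix u c b (SPP y x) s cc f =
         feasible_flow tlf hdf Afix u c b (SPP x y) s cc f"
proof -
  have "sp_arcs (SPP y x) = sp_arcs (SPP x y)" "sp_verts tlf hdf (SPP y x) = sp_verts tlf hdf (SPP x y)"
    by (auto simp: sp_verts_def)
  moreover have "sp_orig tlf hdf (SPP y x) = sp_orig tlf hdf (SPP x y)"
    "sp_targ tlf hdf (SPP y x) = sp_targ tlf hdf (SPP x y)"
    using assms by auto
  ultimately show ?thesis unfolding feasible_flow_def by simp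
qed

lemma feasible_flow_SPP_restrict:
  assumes wf: "sp_wf tlf hdf (SPP x y)"
    and feas: "feasible_flow tlf hdf Afix u c b (SPP x y) s cc f"
  shows "feasible_flow tlf hdf Afix u c b x
           (\<lambda>k. net_out tlf hdf (sp_arcs x) (f k) (sp_orig tlf hdf x))
           (\<lambda>k. \<Sum>a\<in>sp_arcs x. c a * f k a) f"
proof -
  have "net_out tlf hdf (sp_arcs x) (f k) w = b k w"
    if w: "w \<in> sp_verts tlf hdf x - {sp_targ tlf hdf x}" "w \<noteq> sp_orig tlf hdf x" for w k
  proof -
    have "w \<notin> sp_verts tlf hdf y" using w wf by auto
    then have "net_out tlf hdf (sp_arcs y) (f k) w = 0" by (rule net_out_outside_verts)
    moreover have "w \<in> sp_verts tlf hdf (SPP x y) - {sp_targ tlf hdf (SPP x y)}"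
      using w by (auto simp: sp_verts_def)
    then have "net_out tlf hdf (sp_arcs (SPP x y)) (f k) w = b k w"
      using feas w(2) unfolding feasible_flow_def by simp
    ultimately show ?thesis by (simp add: net_out_SPP[OF wf])
  qed
  then show ?thesis using feas by (auto simp: feasible_flow_def)
qed

lemma feasible_flow_SPP_split:
  assumes wf: "sp_wf tlf hdf (SPP x y)"
    and c_nonneg: "\<And>a. a \<in> sp_arcs (SPP x y) \<Longrightarrow> 0 \<le> c a"
    and feas: "feasible_flow tlf hdf Afix u c b (SPP x y) s cc f"
  obtains sx sy cx cy where
    "\<forall>k. sx k + sy k = s k \<and> cx k + cy k = cc k
         \<and> 0 \<le> sx k \<and> 0 \<le> sy k \<and> 0 \<le> cx k \<and> 0 \<le> cy k"
    "feasible_flow tlf hdf Afix u c b x sx cx f"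
    "feasible_flow tlf hdf Afix u c b y sy cy f"
proof
  let ?o = "sp_orig tlf hdf x"
  define sx where "sx k = net_out tlf hdf (sp_arcs x) (f k) ?o" for k
  define sy where "sy k = net_out tlf hdf (sp_arcs y) (f k) ?o" for k
  define cx where "cx k = (\<Sum>a\<in>sp_arcs x. c a * f k a)" for k
  define cy where "cy k = (\<Sum>a\<in>sp_arcs y. c a * f k a)" for k
  have wf_x: "sp_wf tlf hdf x" and wf_y: "sp_wf tlf hdf y" and orig_y: "sp_orig tlf hdf y = ?o"
    using wf by simp_all
  have f_nonneg: "0 \<le> f k a" if "a \<in> sp_arcs (SPP x y)" for a k
    using feas that by (simp add: feasible_flow_def)
  show "feasible_flow tlf hdf Afix u c b x sx cx f"
    unfolding sx_def cx_def by (rule feasible_flow_SPP_restrict[OF wf feas])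
  have "feasible_flow tlf hdf Afix u c b y sy cy f"
    if "feasible_flow tlf hdf Afix u c b (SPP y x) s cc f"
    using feasible_flow_SPP_restrict[OF sp_wf_SPP_commute[OF wf] that]
    unfolding sy_def cy_def orig_y .
  then show "feasible_flow tlf hdf Afix u c b y sy cy f"
    using feas feasible_flow_SPP_commute[OF wf] by blast
  show "\<forall>k. sx k + sy k = s k \<and> cx k + cy k = cc k
         \<and> 0 \<le> sx k \<and> 0 \<le> sy k \<and> 0 \<le> cx k \<and> 0 \<le> cy k"
  proof
    fix k
    have "?o \<in> sp_verts tlf hdf x" "?o \<noteq> sp_targ tlf hdf x"
      using sp_orig_in_verts sp_wf_orig_neq_targ[OF wf_x] by blast+
    then have "?o \<in> sp_verts tlf hdf (SPP x y) - {sp_targ tlf hdf (SPP x y)}"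
      by (auto simp: sp_verts_def)
    then have "net_out tlf hdf (sp_arcs (SPP x y)) (f k) ?o = s k"
      using feas by (simp add: feasible_flow_def)
    then have "sx k + sy k = s k"
      unfolding sx_def sy_def by (simp add: net_out_SPP[OF wf])
    moreover have "cx k + cy k = cc k"
      using feas by (simp add: feasible_flow_def cx_def cy_def sum_arcs_SPP[OF wf])
    moreover have "0 \<le> sx k"
      unfolding sx_def by (rule net_out_orig_nonneg[OF wf_x]) (simp add: f_nonneg)
    moreover have "0 \<le> sy k"
      unfolding sy_def using net_out_orig_nonneg[OF wf_y] f_nonneg orig_y by simp
    moreover have "0 \<le> cx k" "0 \<le> cy k"
      using c_nonneg f_nonneg by (auto simp: cx_def cy_def intro!: sum_nonneg)
    ultimately show "sx k + sy k = s k \<and> cx k + cy k = cc k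
         \<and> 0 \<le> sx k \<and> 0 \<le> sy k \<and> 0 \<le> cx k \<and> 0 \<le> cy k" by simp
  qed
qed

lemma feasible_flows_SPP_conservation:
  assumes wf: "sp_wf tlf hdf (SPP x y)"
    and supplies: "\<And>k. sx k + sy k = s k"
    and feas_x: "feasible_flow tlf hdf Afix u c b x sx cx fx"
    and feas_y: "feasible_flow tlf hdf Afix u c b y sy cy fy"
    and w: "w \<in> sp_verts tlf hdf (SPP x y) - {sp_targ tlf hdf (SPP x y)}"
  shows "net_out tlf hdf (sp_arcs x) (fx k) w + net_out tlf hdf (sp_arcs y) (fy k) w =
         (if w = sp_orig tlf hdf x then s k else b k w)"
proof -
  let ?o = "sp_orig tlf hdf x" and ?t = "sp_targ tlf hdf x"
  have ends: "sp_orig tlf hdf y = ?o" "sp_targ tlf hdf y = ?t"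
    and shared: "sp_verts tlf hdf x \<inter> sp_verts tlf hdf y = {?o, ?t}"
    using wf by simp_all
  have in_union: "w \<in> sp_verts tlf hdf x \<union> sp_verts tlf hdf y" and "w \<noteq> ?t"
    using w by (auto simp: sp_verts_def)
  note net_x = feasible_flow_net_out[OF feas_x \<open>w \<noteq> ?t\<close>, of k]
  note net_y = feasible_flow_net_out[OF feas_y, of w k, unfolded ends]
  show ?thesis
  proof (cases "w = ?o")
    case True
    have "?o \<in> sp_verts tlf hdf x" "?o \<in> sp_verts tlf hdf y" using shared by blast+
    with True show ?thesis using net_x net_y \<open>w \<noteq> ?t\<close> supplies by simp
  next
    case False
    then have "w \<notin> sp_verts tlf hdf x \<or> w \<notin> sp_verts tlf hdf y"
      using shared \<open>w \<noteq> ?t\<close> by blast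
    then show ?thesis using False in_union net_x net_y \<open>w \<noteq> ?t\<close> by auto
  qed
qed

lemma feasible_flow_SPP_glue:
  assumes wf: "sp_wf tlf hdf (SPP x y)"
    and sums: "\<And>k. sx k + sy k = s k" "\<And>k. cx k + cy k = cc k"
    and feas_x: "feasible_flow tlf hdf Afix u c b x sx cx fx"
    and feas_y: "feasible_flow tlf hdf Afix u c b y sy cy fy"
  shows "feasible_flow tlf hdf Afix u c b (SPP x y) s cc
           (\<lambda>k a. if a \<in> sp_arcs x then fx k a else fy k a)"
proof -
  let ?f = "\<lambda>k a. if a \<in> sp_arcs x then fx k a else fy k a"
  have on_x: "a \<in> sp_arcs x \<Longrightarrow> ?f k a = fx k a"
    and on_y: "a \<in> sp_arcs y \<Longrightarrow> ?f k a = fy k a" for a k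
    using wf by auto
  have net: "net_out tlf hdf (sp_arcs x \<union> sp_arcs y) (?f k) w =
             net_out tlf hdf (sp_arcs x) (fx k) w + net_out tlf hdf (sp_arcs y) (fy k) w" for k w
  proof -
    have "net_out tlf hdf (sp_arcs x) (?f k) w = net_out tlf hdf (sp_arcs x) (fx k) w"
      "net_out tlf hdf (sp_arcs y) (?f k) w = net_out tlf hdf (sp_arcs y) (fy k) w"
      using on_x on_y by (auto intro: net_out_cong)
    then show ?thesis by (simp add: net_out_SPP[OF wf])
  qed
  have cost: "(\<Sum>a\<in>sp_arcs x \<union> sp_arcs y. c a * ?f k a) = cc k" for k
  proof -
    have "(\<Sum>a\<in>sp_arcs x. c a * ?f k a) = cx k" "(\<Sum>a\<in>sp_arcs y. c a * ?f k a) = cy k"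
      using feas_x feas_y on_x on_y by (auto simp: feasible_flow_def cong: sum.cong)
    then show ?thesis by (simp add: sum_arcs_SPP[OF wf] sums)
  qed
  show ?thesis
    unfolding feasible_flow_def
  proof (intro conjI ballI allI)
    fix k show "(\<Sum>a\<in>sp_arcs (SPP x y). c a * ?f k a) = cc k"
      using cost by simp
  next
    fix w k assume "w \<in> sp_verts tlf hdf (SPP x y) - {sp_targ tlf hdf (SPP x y)}"
    then show "net_out tlf hdf (sp_arcs (SPP x y)) (?f k) w =
        (if w = sp_orig tlf hdf (SPP x y) then s k else b k w)"
      using feasible_flows_SPP_conservation[OF wf sums(1) feas_x feas_y] by (simp add: net)
  next
    fix a k k' assume "a \<in> Afix \<inter> sp_arcs (SPP x y)"
    then show "?f k a = ?f k' a" using feas_x feas_y by (auto simp: feasible_flow_def)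
  next
    fix a k assume "a \<in> sp_arcs (SPP x y)"
    then show "0 \<le> ?f k a" "?f k a \<le> u a" using feas_x feas_y by (auto simp: feasible_flow_def)
  qed
qed

lemma feasible_flow_SPP_iff:
  assumes wf: "sp_wf tlf hdf (SPP x y)"
    and c_nonneg: "\<And>a. a \<in> sp_arcs (SPP x y) \<Longrightarrow> 0 \<le> c a"
  shows "(\<exists>f. feasible_flow tlf hdf Afix u c b (SPP x y) s cc f) \<longleftrightarrow>
    (\<exists>sx sy cx cy. (\<forall>k. sx k + sy k = s k \<and> cx k + cy k = cc k
                         \<and> 0 \<le> sx k \<and> 0 \<le> sy k \<and> 0 \<le> cx k \<and> 0 \<le> cy k)
       \<and> (\<exists>f. feasible_flow tlf hdf Afix u c b x sx cx f)
       \<and> (\<exists>f. feasible_flow tlf hdf Afix u c b y sy cy f))"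
    (is "?lhs \<longleftrightarrow> ?rhs")
proof
  assume ?lhs
  then obtain f where feas: "feasible_flow tlf hdf Afix u c b (SPP x y) s cc f" ..
  obtain sx sy cx cy where
    "\<forall>k. sx k + sy k = s k \<and> cx k + cy k = cc k
       \<and> 0 \<le> sx k \<and> 0 \<le> sy k \<and> 0 \<le> cx k \<and> 0 \<le> cy k"
    "feasible_flow tlf hdf Afix u c b x sx cx f" "feasible_flow tlf hdf Afix u c b y sy cy f"
    by (rule feasible_flow_SPP_split[OF wf c_nonneg feas])
  then show ?rhs by blast
next
  assume ?rhs
  then obtain sx sy cx cy fx fy where
    sums: "\<forall>k. sx k + sy k = s k \<and> cx k + cy k = cc k
             \<and> 0 \<le> sx k \<and> 0 \<le> sy k \<and> 0 \<le> cx k \<and> 0 \<le> cy k"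
    and feas_x: "feasible_flow tlf hdf Afix u c b x sx cx fx"
    and feas_y: "feasible_flow tlf hdf Afix u c b y sy cy fy"
    by blast
  have "feasible_flow tlf hdf Afix u c b (SPP x y) s cc
          (\<lambda>k a. if a \<in> sp_arcs x then fx k a else fy k a)"
    using sums by (intro feasible_flow_SPP_glue[OF wf _ _ feas_x feas_y]) auto
  then show "\<exists>f. feasible_flow tlf hdf Afix u c b (SPP x y) s cc f" by blast
qed

lemma Inf_zero_infinity:
  fixes S :: "enat set"
  assumes "S \<subseteq> {0, \<infinity>}"
  shows "Inf S = (if 0 \<in> S then 0 else \<infinity>)"
proof (cases "0 \<in> S")
  case True
  then show ?thesis using Inf_lower[OF True] by simp
next
  case False
  with assms have "\<forall>z\<in>S. z = top" by (auto simp: top_enat_def)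
  then have "Inf S = top" by (simp add: Inf_top_conv)
  with False show ?thesis by (simp add: top_enat_def)
qed

lemma demand_sums_zero_infinity:
  "{demand tlf hdf Afix u c b x sx cx + demand tlf hdf Afix u c b y sy cy | sx sy cx cy.
     R sx sy cx cy} \<subseteq> {0, \<infinity>}"
  by (auto simp: demand_eq_feasible_flow)

lemma zero_mem_demand_sums_iff:
  "0 \<in> {demand tlf hdf Afix u c b x sx cx + demand tlf hdf Afix u c b y sy cy | sx sy cx cy.
          R sx sy cx cy}
   \<longleftrightarrow> (\<exists>sx sy cx cy. R sx sy cx cy
          \<and> (\<exists>f. feasible_flow tlf hdf Afix u c b x sx cx f)
          \<and> (\<exists>f. feasible_flow tlf hdf Afix u c b y sy cy f))"
  by (force simp: demand_eq_feasible_flow)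

theorem mainTheorem10:
  fixes V :: "'v set" and A Afix :: "'a set" and tlf hdf :: "'a \<Rightarrow> 'v"
    and u c :: "'a \<Rightarrow> int" and b :: "'l::finite \<Rightarrow> 'v \<Rightarrow> int"
    and T v x y :: "'a sptree" and s cc :: "'l \<Rightarrow> int"
  assumes "finite A"
    and "Afix \<subseteq> A"
    and "\<forall>a\<in>A. 0 \<le> u a"
    and "\<forall>a\<in>A. 0 \<le> c a"
    and "\<forall>k. (\<Sum>w\<in>V. b k w) = 0"
    and "is_sp_tree_of V A tlf hdf T"
    and "v \<in> sp_subtrees T"
    and "v = SPP x y"
    and "\<forall>k. 0 \<le> cc k"
  shows "demand tlf hdf Afix u c b v s cc =
    Inf {demand tlf hdf Afix u c b x sx cx + demand tlf hdf Afix u c b y sy cy | sx sy cx cy.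
           (\<forall>k. sx k + sy k = s k \<and> cx k + cy k = cc k
                \<and> 0 \<le> sx k \<and> 0 \<le> sy k \<and> 0 \<le> cx k \<and> 0 \<le> cy k)}"
    (is "_ = Inf ?S")
proof -
  have wf: "sp_wf tlf hdf (SPP x y)"
    using assms(6-8) sp_wf_subtree unfolding is_sp_tree_of_def by metis
  have c_nonneg: "\<And>a. a \<in> sp_arcs (SPP x y) \<Longrightarrow> 0 \<le> c a"
    using assms(4,6-8) sp_arcs_subtree unfolding is_sp_tree_of_def by blast
  have "Inf ?S = (if 0 \<in> ?S then 0 else \<infinity>)"
    by (rule Inf_zero_infinity[OF demand_sums_zero_infinity])
  also have "\<dots> = (if \<exists>f. feasible_flow tlf hdf Afix u c b (SPP x y) s cc f then 0 else \<infinity>)"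
    by (simp only: zero_mem_demand_sums_iff feasible_flow_SPP_iff[where c = c, OF wf c_nonneg])
  also have "\<dots> = demand tlf hdf Afix u c b v s cc"
    by (simp only: assms(8) demand_eq_feasible_flow)
  finally show ?thesis ..
qed

end
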